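(* Let $(G_n)$ be a sequence of graphs satisfying conditions (1')–(3') below, and let $A$ be the adjacency matrix of $G_n$. Then for all sufficiently large $n$, the matrix $\frac{1}{\delta-9\overline\lambda}A$ is doubly superstochastic.
   Context: $G_n$ has vertex set $V$, $|V|=n$, average degree $d$, minimum degree $\delta$, maximum degree $\Delta$. For $U,W\subseteq V$, $e(U,W)$ is the number of ordered pairs $(u,w)\in U\times W$ with $u$ adjacent to $w$. A number $\overline\lambda=\overline\lambda(n)>0$ is said to control the edge distribution of $G_n$ if for all $U,W\subseteq V$: $\left|e(U,W)-\frac{d}{n}|U||W|\right|\le\overline\lambda\sqrt{|U||W|}$. Conditions: there is such $\overline\lambda$ with (1') $\Delta-\delta\le\overline\lambda$; (2') $\frac{d}{\overline\lambda}/\log^2n\to\infty$; (3') $\log d\cdot\log\frac{d}{\overline\lambda}/\log n\to\infty$. A nonnegative square matrix $M$ is doubly superstochastic if there is a doubly stochastic matrix $B$ (nonnegative, all row and column sums equal to 1) with $B\le M$ entrywise. *)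

theory Defs
  imports Complex_Main
begin

definition simple_graph :: "nat \<Rightarrow> (nat \<Rightarrow> nat \<Rightarrow> bool) \<Rightarrow> bool" where
  "simple_graph n E \<longleftrightarrow> (\<forall>u<n. \<forall>v<n. E u v \<longleftrightarrow> E v u) \<and> (\<forall>v<n. \<not> E v v)"

definition degree :: "nat \<Rightarrow> (nat \<Rightarrow> nat \<Rightarrow> bool) \<Rightarrow> nat \<Rightarrow> nat" where
  "degree n E v = card {u. u < n \<and> E v u}"

definition avg_degree :: "nat \<Rightarrow> (nat \<Rightarrow> nat \<Rightarrow> bool) \<Rightarrow> real" where
  "avg_degree n E = (\<Sum>v<n. real (degree n E v)) / real n"

definition min_degree :: "nat \<Rightarrow> (nat \<Rightarrow> nat \<Rightarrow> bool) \<Rightarrow> real" where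
  "min_degree n E = real (Min ((degree n E) ` {..<n}))"

definition max_degree :: "nat \<Rightarrow> (nat \<Rightarrow> nat \<Rightarrow> bool) \<Rightarrow> real" where
  "max_degree n E = real (Max ((degree n E) ` {..<n}))"

definition edges_between :: "(nat \<Rightarrow> nat \<Rightarrow> bool) \<Rightarrow> nat set \<Rightarrow> nat set \<Rightarrow> nat" where
  "edges_between E U W = card {(u, w). u \<in> U \<and> w \<in> W \<and> E u w}"

definition controls_edge_distribution :: "nat \<Rightarrow> (nat \<Rightarrow> nat \<Rightarrow> bool) \<Rightarrow> real \<Rightarrow> bool" where
  "controls_edge_distribution n E lam \<longleftrightarrow>
     (\<forall>U W. U \<subseteq> {..<n} \<longrightarrow> W \<subseteq> {..<n} \<longrightarrow>
        \<bar>real (edges_between E U W) - avg_degree n E / real n * real (card U) * real (card W)\<bar>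
          \<le> lam * sqrt (real (card U) * real (card W)))"

definition adjacency_matrix :: "(nat \<Rightarrow> nat \<Rightarrow> bool) \<Rightarrow> nat \<Rightarrow> nat \<Rightarrow> real" where
  "adjacency_matrix E i j = (if E i j then 1 else 0)"

text \<open>n x n real matrices are represented as functions nat => nat => real, indices < n.\<close>
definition doubly_stochastic :: "nat \<Rightarrow> (nat \<Rightarrow> nat \<Rightarrow> real) \<Rightarrow> bool" where
  "doubly_stochastic n B \<longleftrightarrow>
     (\<forall>i<n. \<forall>j<n. 0 \<le> B i j) \<and>
     (\<forall>i<n. (\<Sum>j<n. B i j) = 1) \<and> (\<forall>j<n. (\<Sum>i<n. B i j) = 1)"

definition doubly_superstochastic :: "nat \<Rightarrow> (nat \<Rightarrow> nat \<Rightarrow> real) \<Rightarrow> bool" where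
  "doubly_superstochastic n M \<longleftrightarrow>
     (\<forall>i<n. \<forall>j<n. 0 \<le> M i j) \<and>
     (\<exists>B. doubly_stochastic n B \<and> (\<forall>i<n. \<forall>j<n. B i j \<le> M i j))"

end

theory Submission
  imports Defs "HOL-Analysis.Function_Topology"
begin

text \<open>
  A nonnegative matrix \<open>M\<close> dominates a doubly stochastic matrix as soon as it satisfies the
  fractional Hall condition: \<open>|S|\<close> is at most \<open>|T|\<close> plus the total weight of \<open>M\<close> on
  \<open>S \<times> (V - T)\<close>, for all row sets \<open>S\<close> and column sets \<open>T\<close>. Indeed, take a flow
  \<open>0 \<le> f \<le> M\<close> with row and column sums at most 1 of maximum value (it exists by
  compactness). A column reachable from a deficient row by an alternating
  path of non-saturated forward and nonzero backward entries must be full, for otherwise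
  pushing a little mass along the path would increase the value. So if some row were deficient,
  the reachable rows \<open>S\<close> and columns \<open>T\<close> would violate the Hall condition.

  For \<open>M = A / (\<delta> - 9\<lambda>)\<close> the Hall condition reads \<open>(\<delta> - 9\<lambda>)(|S| - |T|) \<le> e(S, V - T)\<close>.
  Degree counting gives \<open>e(S, V - T) \<ge> \<delta>|S| - \<Delta>|T|\<close>, which suffices when \<open>|T|\<close> is at most
  nine times \<open>|S| - |T|\<close>. Otherwise \<open>|T|\<close> is comparable to \<open>|S|\<close>, and if moreover
  \<open>|S| + |T| \<le> n\<close> the edge distribution bound \<open>e(S, T) \<le> d|S||T|/n + \<lambda>\<surd>(|S||T|)\<close> does it;
  the case \<open>|S| + |T| > n\<close> reduces to this one by replacing \<open>(S, T)\<close> with \<open>(V - T, V - S)\<close>.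
  All that is needed of the graphs is \<open>d > 10\<lambda>\<close>, which (2') guarantees for large \<open>n\<close>.
\<close>

section \<open>Maximum flows below a nonnegative matrix\<close>

text \<open>Entries outside \<open>{..<n}\<^sup>2\<close> are pinned to 0 so that the feasible flows form a compact
  subset of the product space \<open>nat \<times> nat \<Rightarrow> real\<close>.\<close>

definition subflow :: "nat \<Rightarrow> (nat \<Rightarrow> nat \<Rightarrow> real) \<Rightarrow> (nat \<times> nat \<Rightarrow> real) \<Rightarrow> bool" where
  "subflow n M f \<longleftrightarrow>
     (\<forall>i j. (i < n \<and> j < n \<longrightarrow> 0 \<le> f (i, j) \<and> f (i, j) \<le> M i j) \<and>
            (\<not> (i < n \<and> j < n) \<longrightarrow> f (i, j) = 0)) \<and>
     (\<forall>i<n. (\<Sum>j<n. f (i, j)) \<le> 1)"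

definition feasible_flow :: "nat \<Rightarrow> (nat \<Rightarrow> nat \<Rightarrow> real) \<Rightarrow> (nat \<times> nat \<Rightarrow> real) \<Rightarrow> bool" where
  "feasible_flow n M f \<longleftrightarrow> subflow n M f \<and> (\<forall>j<n. (\<Sum>i<n. f (i, j)) \<le> 1)"

definition flow_value :: "nat \<Rightarrow> (nat \<times> nat \<Rightarrow> real) \<Rightarrow> real" where
  "flow_value n f = (\<Sum>i<n. \<Sum>j<n. f (i, j))"

definition maximum_flow :: "nat \<Rightarrow> (nat \<Rightarrow> nat \<Rightarrow> real) \<Rightarrow> (nat \<times> nat \<Rightarrow> real) \<Rightarrow> bool" where
  "maximum_flow n M f \<longleftrightarrow>
     feasible_flow n M f \<and> (\<forall>g. feasible_flow n M g \<longrightarrow> flow_value n g \<le> flow_value n f)"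

lemma maximum_flow_exists:
  assumes "\<forall>i<n. \<forall>j<n. 0 \<le> M i j"
  shows "\<exists>f. maximum_flow n M f"
proof -
  define F where "F = Collect (feasible_flow n M)"
  define box where "box = PiE UNIV (\<lambda>(i, j). if i < n \<and> j < n then {0..M i j} else {0::real})"
  define rows_le_1 where "rows_le_1 = (\<Inter>i<n. {f. (\<Sum>j<n. f (i, j)) \<le> (1::real)})"
  define cols_le_1 where "cols_le_1 = (\<Inter>j<n. {f. (\<Sum>i<n. f (i, j)) \<le> (1::real)})"
  have "compactin (product_topology (\<lambda>_. euclidean) UNIV) box"
    unfolding box_def by (subst compactin_PiE) (auto split: prod.splits)
  then have "compact box"
    by (simp add: euclidean_product_topology)
  moreover have "closed rows_le_1" "closed cols_le_1"
    unfolding rows_le_1_def cols_le_1_def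
    by (intro closed_INT ballI closed_Collect_le continuous_intros; simp)+
  moreover have "F = box \<inter> rows_le_1 \<inter> cols_le_1"
    unfolding F_def box_def rows_le_1_def cols_le_1_def feasible_flow_def subflow_def
    by (auto simp: PiE_iff split: if_splits)
  ultimately have "compact F"
    by (simp add: compact_Int_closed closed_Int)
  moreover have "(\<lambda>_. 0) \<in> F"
    using assms by (simp add: F_def feasible_flow_def subflow_def)
  moreover have "continuous_on F (flow_value n)"
    unfolding flow_value_def
    by (intro continuous_on_sum continuous_on_product_then_coordinatewise[OF continuous_on_id])
  ultimately obtain f where "f \<in> F" "\<forall>g\<in>F. flow_value n g \<le> flow_value n f"
    using continuous_attains_sup[of F "flow_value n"] by blast
  then show ?thesis
    unfolding maximum_flow_def F_def by auto
qed

lemma fun_upd_eq_add: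
  fixes g :: "'a \<Rightarrow> real"
  shows "(g(p := v)) q = g q + (if q = p then v - g p else 0)"
  by auto

lemma sum_row_fun_upd:
  fixes g :: "nat \<times> nat \<Rightarrow> real"
  assumes "j0 < n"
  shows "(\<Sum>j<n. (g((i0, j0) := v)) (i, j))
    = (\<Sum>j<n. g (i, j)) + (if i = i0 then v - g (i0, j0) else 0)"
  using assms by (simp only: fun_upd_eq_add sum.distrib) (auto simp: sum.delta)

lemma sum_col_fun_upd:
  fixes g :: "nat \<times> nat \<Rightarrow> real"
  assumes "i0 < n"
  shows "(\<Sum>i<n. (g((i0, j0) := v)) (i, j))
    = (\<Sum>i<n. g (i, j)) + (if j = j0 then v - g (i0, j0) else 0)"
  using assms by (simp only: fun_upd_eq_add sum.distrib) (auto simp: sum.delta)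

lemma subflow_fun_upd:
  assumes "subflow n M g" "i < n" "j < n" "0 \<le> v" "v \<le> M i j"
    and "(\<Sum>j'<n. g (i, j')) + (v - g (i, j)) \<le> 1"
  shows "subflow n M (g((i, j) := v))"
  using assms sum_row_fun_upd[OF \<open>j < n\<close>, of g i v] unfolding subflow_def by auto

lemma dist_fun_upd:
  fixes f g :: "'a \<Rightarrow> real"
  shows "\<bar>(g(p := v)) q - f q\<bar> \<le> \<bar>g q - f q\<bar> + \<bar>v - g p\<bar>"
  using abs_triangle_ineq[of "g q - f q" "v - g p"] by (auto simp: fun_upd_eq_add algebra_simps)

lemma eventually_scaled_less:
  fixes a C :: real
  assumes "0 < a"
  shows "\<forall>\<^sub>F \<eta> in at_right 0. 0 < \<eta> \<and> C * \<eta> < a"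
proof -
  have "((\<lambda>\<eta>. C * \<eta>) \<longlongrightarrow> 0) (at_right (0::real))"
    by (intro tendsto_mult_right_zero tendsto_ident_at)
  then have "\<forall>\<^sub>F \<eta> in at_right 0. C * \<eta> < a"
    using assms by (rule order_tendstoD)
  then show ?thesis
    using eventually_at_right_less by (rule eventually_conj[rotated])
qed

inductive residual_row and residual_col
  for n :: nat and M :: "nat \<Rightarrow> nat \<Rightarrow> real" and f :: "nat \<times> nat \<Rightarrow> real" where
  deficient: "i < n \<Longrightarrow> (\<Sum>j<n. f (i, j)) < 1 \<Longrightarrow> residual_row n M f i"
| backward: "residual_col n M f j \<Longrightarrow> i < n \<Longrightarrow> 0 < f (i, j) \<Longrightarrow> residual_row n M f i"
| forward: "residual_row n M f i \<Longrightarrow> j < n \<Longrightarrow> f (i, j) < M i j \<Longrightarrow> residual_col n M f j"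

lemma residual_row_less: "residual_row n M f i \<Longrightarrow> i < n"
  by (auto elim: residual_row.cases)

lemma residual_col_less: "residual_col n M f j \<Longrightarrow> j < n"
  by (auto elim: residual_col.cases)

definition row_relievable :: "nat \<Rightarrow> (nat \<Rightarrow> nat \<Rightarrow> real) \<Rightarrow> (nat \<times> nat \<Rightarrow> real) \<Rightarrow> nat \<Rightarrow> bool" where
  "row_relievable n M f i \<longleftrightarrow> (\<exists>C. \<forall>\<^sub>F \<eta> in at_right 0. \<exists>g. subflow n M g \<and>
     (\<forall>p. \<bar>g p - f p\<bar> \<le> C * \<eta>) \<and> (\<forall>j<n. (\<Sum>i<n. g (i, j)) = (\<Sum>i<n. f (i, j))) \<and>
     (\<Sum>j<n. g (i, j)) \<le> 1 - \<eta>)"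

definition col_raisable :: "nat \<Rightarrow> (nat \<Rightarrow> nat \<Rightarrow> real) \<Rightarrow> (nat \<times> nat \<Rightarrow> real) \<Rightarrow> nat \<Rightarrow> bool" where
  "col_raisable n M f j \<longleftrightarrow> (\<exists>C. \<forall>\<^sub>F \<eta> in at_right 0. \<exists>g. subflow n M g \<and>
     (\<forall>p. \<bar>g p - f p\<bar> \<le> C * \<eta>) \<and>
     (\<forall>j'<n. (\<Sum>i<n. g (i, j')) = (\<Sum>i<n. f (i, j')) + (if j' = j then \<eta> else 0)))"

lemma deficient_row_relievable:
  assumes "subflow n M f" "(\<Sum>j<n. f (i, j)) < 1"
  shows "row_relievable n M f i"
proof -
  have "\<forall>\<^sub>F \<eta> in at_right 0. 0 < \<eta> \<and> 1 * \<eta> < 1 - (\<Sum>j<n. f (i, j))"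
    using assms(2) by (intro eventually_scaled_less) simp
  then show ?thesis
    unfolding row_relievable_def
    by (intro exI[of _ 0]) (auto elim!: eventually_mono intro!: exI[of _ f] simp: assms(1))
qed

text \<open>Each step along an alternating path changes one entry by \<open>\<eta>\<close>; the accumulated distance
  to \<open>f\<close> is \<open>O(\<eta>)\<close>, so for small \<open>\<eta>\<close> the slack of the entry used in the step is not exhausted.\<close>

lemma col_raisable_imp_row_relievable:
  assumes "col_raisable n M f j" "i < n" "j < n" "0 < f (i, j)"
  shows "row_relievable n M f i"
proof -
  obtain C where IH: "\<forall>\<^sub>F \<eta> in at_right 0. \<exists>g. subflow n M g \<and> (\<forall>p. \<bar>g p - f p\<bar> \<le> C * \<eta>) \<and>
      (\<forall>j'<n. (\<Sum>i<n. g (i, j')) = (\<Sum>i<n. f (i, j')) + (if j' = j then \<eta> else 0))"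
    using assms(1) by (auto simp: col_raisable_def)
  have step: "\<exists>g'. subflow n M g' \<and> (\<forall>p. \<bar>g' p - f p\<bar> \<le> (C + 1) * \<eta>) \<and>
      (\<forall>j'<n. (\<Sum>i<n. g' (i, j')) = (\<Sum>i<n. f (i, j'))) \<and> (\<Sum>j'<n. g' (i, j')) \<le> 1 - \<eta>"
    if hyp: "(0 < \<eta> \<and> (C + 1) * \<eta> < f (i, j)) \<and>
      (\<exists>g. subflow n M g \<and> (\<forall>p. \<bar>g p - f p\<bar> \<le> C * \<eta>) \<and>
        (\<forall>j'<n. (\<Sum>i<n. g (i, j')) = (\<Sum>i<n. f (i, j')) + (if j' = j then \<eta> else 0)))" for \<eta>
  proof -
    obtain g where g: "subflow n M g" "\<forall>p. \<bar>g p - f p\<bar> \<le> C * \<eta>"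
      "\<forall>j'<n. (\<Sum>i<n. g (i, j')) = (\<Sum>i<n. f (i, j')) + (if j' = j then \<eta> else 0)"
      using hyp by blast
    have small: "0 < \<eta>" "(C + 1) * \<eta> < f (i, j)"
      using hyp by blast+
    have "f (i, j) - C * \<eta> \<le> g (i, j)"
      using spec[OF g(2), of "(i, j)"] by (simp add: abs_le_iff)
    then have "\<eta> \<le> g (i, j)"
      using small by (simp add: algebra_simps)
    moreover have "g (i, j) \<le> M i j" and row: "(\<Sum>j'<n. g (i, j')) \<le> 1"
      using g(1) \<open>i < n\<close> \<open>j < n\<close> by (auto simp: subflow_def)
    ultimately have "subflow n M (g((i, j) := g (i, j) - \<eta>))"
      using small g(1) \<open>i < n\<close> \<open>j < n\<close> by (intro subflow_fun_upd) auto
    moreover have "\<bar>(g((i, j) := g (i, j) - \<eta>)) p - f p\<bar> \<le> (C + 1) * \<eta>" for p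
      using dist_fun_upd[of g "(i, j)" "g (i, j) - \<eta>" p f] spec[OF g(2), of p] small
      by (simp add: distrib_right del: fun_upd_apply)
    ultimately show ?thesis
      using small g(3) row \<open>i < n\<close> \<open>j < n\<close>
      by (intro exI[of _ "g((i, j) := g (i, j) - \<eta>)"])
        (simp add: sum_row_fun_upd sum_col_fun_upd del: fun_upd_apply)
  qed
  show ?thesis
    unfolding row_relievable_def
    by (intro exI[of _ "C + 1"] step
        eventually_mono[OF eventually_conj[OF eventually_scaled_less[OF assms(4)] IH]])
qed

lemma row_relievable_imp_col_raisable:
  assumes "row_relievable n M f i" "i < n" "j < n" "f (i, j) < M i j"
  shows "col_raisable n M f j"
proof -
  obtain C where IH: "\<forall>\<^sub>F \<eta> in at_right 0. \<exists>g. subflow n M g \<and>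
     (\<forall>p. \<bar>g p - f p\<bar> \<le> C * \<eta>) \<and> (\<forall>j<n. (\<Sum>i<n. g (i, j)) = (\<Sum>i<n. f (i, j))) \<and>
     (\<Sum>j<n. g (i, j)) \<le> 1 - \<eta>"
    using assms(1) by (auto simp: row_relievable_def)
  have step: "\<exists>g'. subflow n M g' \<and> (\<forall>p. \<bar>g' p - f p\<bar> \<le> (C + 1) * \<eta>) \<and>
      (\<forall>j'<n. (\<Sum>i<n. g' (i, j')) = (\<Sum>i<n. f (i, j')) + (if j' = j then \<eta> else 0))"
    if hyp: "(0 < \<eta> \<and> (C + 1) * \<eta> < M i j - f (i, j)) \<and>
      (\<exists>g. subflow n M g \<and> (\<forall>p. \<bar>g p - f p\<bar> \<le> C * \<eta>) \<and>
        (\<forall>j<n. (\<Sum>i<n. g (i, j)) = (\<Sum>i<n. f (i, j))) \<and> (\<Sum>j<n. g (i, j)) \<le> 1 - \<eta>)" for \<eta>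
  proof -
    obtain g where g: "subflow n M g" "\<forall>p. \<bar>g p - f p\<bar> \<le> C * \<eta>"
      "\<forall>j<n. (\<Sum>i<n. g (i, j)) = (\<Sum>i<n. f (i, j))" "(\<Sum>j<n. g (i, j)) \<le> 1 - \<eta>"
      using hyp by blast
    have small: "0 < \<eta>" "(C + 1) * \<eta> < M i j - f (i, j)"
      using hyp by blast+
    have "g (i, j) \<le> f (i, j) + C * \<eta>"
      using spec[OF g(2), of "(i, j)"] by (simp add: abs_le_iff)
    then have "g (i, j) + \<eta> \<le> M i j"
      using small by (simp add: algebra_simps)
    moreover have "0 \<le> g (i, j)"
      using g(1) \<open>i < n\<close> \<open>j < n\<close> by (auto simp: subflow_def)
    ultimately have "subflow n M (g((i, j) := g (i, j) + \<eta>))"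
      using small g(1,4) \<open>i < n\<close> \<open>j < n\<close> by (intro subflow_fun_upd) auto
    moreover have "\<bar>(g((i, j) := g (i, j) + \<eta>)) p - f p\<bar> \<le> (C + 1) * \<eta>" for p
      using dist_fun_upd[of g "(i, j)" "g (i, j) + \<eta>" p f] spec[OF g(2), of p] small
      by (simp add: distrib_right del: fun_upd_apply)
    ultimately show ?thesis
      using small g(3) \<open>i < n\<close> \<open>j < n\<close>
      by (intro exI[of _ "g((i, j) := g (i, j) + \<eta>)"])
        (simp add: sum_col_fun_upd del: fun_upd_apply)
  qed
  have slack: "0 < M i j - f (i, j)"
    using assms(4) by simp
  show ?thesis
    unfolding col_raisable_def
    by (intro exI[of _ "C + 1"] step
        eventually_mono[OF eventually_conj[OF eventually_scaled_less[OF slack] IH]])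
qed

lemma residual_row_relievable_col_raisable:
  assumes "subflow n M f"
  shows "residual_row n M f i \<Longrightarrow> row_relievable n M f i"
    and "residual_col n M f j \<Longrightarrow> col_raisable n M f j"
proof (induction rule: residual_row_residual_col.inducts)
  case (deficient i)
  then show ?case
    using assms by (intro deficient_row_relievable)
next
  case (backward j i)
  then show ?case
    using residual_col_less by (intro col_raisable_imp_row_relievable)
next
  case (forward i j)
  then show ?case
    using residual_row_less by (intro row_relievable_imp_col_raisable)
qed

lemma flow_value_cols: "flow_value n f = (\<Sum>j<n. \<Sum>i<n. f (i, j))"
  unfolding flow_value_def by (rule sum.swap)

lemma maximum_flow_residual_col_full:
  assumes f: "maximum_flow n M f" and j: "residual_col n M f j"
  shows "(\<Sum>i<n. f (i, j)) = 1"
proof (rule ccontr)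
  assume "(\<Sum>i<n. f (i, j)) \<noteq> 1"
  moreover have "j < n"
    using j by (rule residual_col_less)
  ultimately have "0 < 1 - (\<Sum>i<n. f (i, j))"
    using f by (auto simp: maximum_flow_def feasible_flow_def)
  moreover obtain C where "\<forall>\<^sub>F \<eta> in at_right 0. \<exists>g. subflow n M g \<and>
      (\<forall>p. \<bar>g p - f p\<bar> \<le> C * \<eta>) \<and>
      (\<forall>j'<n. (\<Sum>i<n. g (i, j')) = (\<Sum>i<n. f (i, j')) + (if j' = j then \<eta> else 0))"
    using residual_row_relievable_col_raisable(2)[OF _ j] f
    unfolding col_raisable_def maximum_flow_def feasible_flow_def by blast
  ultimately have "\<forall>\<^sub>F \<eta> in at_right 0. (0 < \<eta> \<and> 1 * \<eta> < 1 - (\<Sum>i<n. f (i, j))) \<and>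
      (\<exists>g. subflow n M g \<and> (\<forall>p. \<bar>g p - f p\<bar> \<le> C * \<eta>) \<and>
        (\<forall>j'<n. (\<Sum>i<n. g (i, j')) = (\<Sum>i<n. f (i, j')) + (if j' = j then \<eta> else 0)))"
    by (rule eventually_conj[OF eventually_scaled_less])
  then obtain \<eta> g where \<eta>: "0 < \<eta>" "\<eta> < 1 - (\<Sum>i<n. f (i, j))" and "subflow n M g"
    and g_cols: "\<forall>j'<n. (\<Sum>i<n. g (i, j')) = (\<Sum>i<n. f (i, j')) + (if j' = j then \<eta> else 0)"
    by (auto dest: eventually_happens'[OF trivial_limit_at_right_real])
  then have "feasible_flow n M g"
    using f by (auto simp: feasible_flow_def maximum_flow_def)
  moreover have "flow_value n g = flow_value n f + \<eta>"
    using g_cols \<open>j < n\<close> by (simp add: flow_value_cols sum.distrib)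
  ultimately show False
    using f \<eta> by (auto simp: maximum_flow_def)
qed

definition hall_condition :: "nat \<Rightarrow> (nat \<Rightarrow> nat \<Rightarrow> real) \<Rightarrow> bool" where
  "hall_condition n M \<longleftrightarrow> (\<forall>S T. S \<subseteq> {..<n} \<longrightarrow> T \<subseteq> {..<n} \<longrightarrow>
     real (card S) \<le> real (card T) + (\<Sum>i\<in>S. \<Sum>j\<in>{..<n} - T. M i j))"

lemma maximum_flow_row_full:
  assumes hall: "hall_condition n M" and f: "maximum_flow n M f" and "i < n"
  shows "(\<Sum>j<n. f (i, j)) = 1"
proof (rule ccontr)
  assume "(\<Sum>j<n. f (i, j)) \<noteq> 1"
  with f \<open>i < n\<close> have deficient: "(\<Sum>j<n. f (i, j)) < 1"
    by (auto simp: maximum_flow_def feasible_flow_def subflow_def)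
  define S where "S = {i. i < n \<and> residual_row n M f i}"
  define T where "T = {j. j < n \<and> residual_col n M f j}"
  have S: "S \<subseteq> {..<n}" "finite S" and T: "T \<subseteq> {..<n}" "finite T"
    by (auto simp: S_def T_def intro: finite_subset)
  have f_bounds: "0 \<le> f (i', j)" "f (i', j) \<le> M i' j" "(\<Sum>j<n. f (i', j)) \<le> 1"
    if "i' < n" "j < n" for i' j
    using f that by (auto simp: maximum_flow_def feasible_flow_def subflow_def)
  have saturated: "f (i', j) = M i' j" if "i' \<in> S" "j \<in> {..<n} - T" for i' j
    using that f_bounds(2)[of i' j] by (fastforce simp: S_def T_def intro: forward)
  have empty: "f (i', j) = 0" if "i' \<in> {..<n} - S" "j \<in> T" for i' j
    using that f_bounds(1)[of i' j] by (fastforce simp: S_def T_def intro: backward)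
  have "(\<Sum>i'\<in>S. \<Sum>j<n. f (i', j)) < (\<Sum>i'\<in>S. 1)"
    using S deficient f_bounds(3) \<open>i < n\<close>
    by (intro sum_strict_mono_ex1) (auto simp: S_def intro: residual_row_residual_col.deficient)
  also have "\<dots> \<le> real (card T) + (\<Sum>i'\<in>S. \<Sum>j\<in>{..<n} - T. M i' j)"
    using hall S T by (simp add: hall_condition_def)
  also have "real (card T) = (\<Sum>j\<in>T. \<Sum>i'<n. f (i', j))"
    using f T maximum_flow_residual_col_full by (simp add: T_def)
  also have "\<dots> = (\<Sum>j\<in>T. \<Sum>i'\<in>S. f (i', j))"
    using S empty by (intro sum.cong refl sum.mono_neutral_right) auto
  also have "(\<Sum>i'\<in>S. \<Sum>j\<in>{..<n} - T. M i' j) = (\<Sum>i'\<in>S. \<Sum>j\<in>{..<n} - T. f (i', j))"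
    using saturated by simp
  also have "(\<Sum>j\<in>T. \<Sum>i'\<in>S. f (i', j)) + \<dots> = (\<Sum>i'\<in>S. \<Sum>j<n. f (i', j))"
    unfolding sum.swap[of _ S T]
    using T by (simp add: sum.distrib[symmetric] sum.subset_diff[of T "{..<n}"] add.commute)
  finally show False
    by simp
qed

lemma doubly_superstochastic_if_hall:
  assumes nonneg: "\<forall>i<n. \<forall>j<n. 0 \<le> M i j" and hall: "hall_condition n M"
  shows "doubly_superstochastic n M"
proof -
  obtain f where f: "maximum_flow n M f"
    using maximum_flow_exists[OF nonneg] by blast
  have rows: "(\<Sum>j<n. f (i, j)) = 1" if "i < n" for i
    using that by (rule maximum_flow_row_full[OF hall f])
  have cols_le: "(\<Sum>i<n. f (i, j)) \<le> 1" if "j < n" for j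
    using f that by (simp add: maximum_flow_def feasible_flow_def)
  have "(\<Sum>j<n. \<Sum>i<n. f (i, j)) = (\<Sum>j<n. 1)"
    using rows by (simp add: flow_value_cols[symmetric] flow_value_def)
  then have cols: "(\<Sum>i<n. f (i, j)) = 1" if "j < n" for j
    using sum_nonneg_eq_0_iff[of "{..<n}" "\<lambda>j. 1 - (\<Sum>i<n. f (i, j))"] cols_le that
    by (simp add: sum_subtractf)
  show ?thesis
    using nonneg f rows cols
    unfolding doubly_superstochastic_def doubly_stochastic_def
      maximum_flow_def feasible_flow_def subflow_def
    by (intro conjI exI[of _ "\<lambda>i j. f (i, j)"]) auto
qed

section \<open>Graphs with controlled edge distribution\<close>

definition edge_weight :: "(nat \<Rightarrow> nat \<Rightarrow> bool) \<Rightarrow> nat set \<Rightarrow> nat set \<Rightarrow> real" where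
  "edge_weight E U W = (\<Sum>u\<in>U. \<Sum>w\<in>W. adjacency_matrix E u w)"

lemma card_adjacent_eq_sum:
  assumes "finite W"
  shows "real (card {w \<in> W. E u w}) = (\<Sum>w\<in>W. adjacency_matrix E u w)"
  using sum.inter_filter[OF assms, of "\<lambda>_. 1 :: real" "E u"] by (simp add: adjacency_matrix_def)

lemma edges_between_eq_edge_weight:
  assumes "finite U" "finite W"
  shows "real (edges_between E U W) = edge_weight E U W"
proof -
  have "{(u, w). u \<in> U \<and> w \<in> W \<and> E u w} = Sigma U (\<lambda>u. {w \<in> W. E u w})"
    by auto
  then show ?thesis
    using assms by (simp add: edges_between_def edge_weight_def card_SigmaI card_adjacent_eq_sum)
qed

lemma edge_weight_nonneg: "0 \<le> edge_weight E U W"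
  unfolding edge_weight_def by (intro sum_nonneg) (simp add: adjacency_matrix_def)

lemma edge_weight_Diff:
  assumes "Y \<subseteq> Z" "finite Z"
  shows "edge_weight E X (Z - Y) = edge_weight E X Z - edge_weight E X Y"
  using assms by (simp add: edge_weight_def sum.subset_diff[of Y Z] sum.distrib)

lemma edge_weight_commute:
  assumes "simple_graph n E" "X \<subseteq> {..<n}" "Y \<subseteq> {..<n}"
  shows "edge_weight E X Y = edge_weight E Y X"
proof -
  have "edge_weight E X Y = (\<Sum>x\<in>X. \<Sum>y\<in>Y. adjacency_matrix E y x)"
    using assms unfolding edge_weight_def simple_graph_def adjacency_matrix_def
    by (intro sum.cong refl) (auto simp: subset_iff)
  then show ?thesis
    unfolding edge_weight_def by (simp add: sum.swap[of _ Y X])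
qed

lemma edge_weight_all: "edge_weight E X {..<n} = (\<Sum>x\<in>X. real (degree n E x))"
  using card_adjacent_eq_sum[of "{..<n}" E]
  by (simp add: edge_weight_def degree_def lessThan_def)

lemma degree_bounds:
  assumes "v < n"
  shows "min_degree n E \<le> degree n E v" "degree n E v \<le> max_degree n E"
  using assms by (simp_all add: min_degree_def max_degree_def)

lemma edge_weight_all_bounds:
  assumes "X \<subseteq> {..<n}"
  shows "min_degree n E * card X \<le> edge_weight E X {..<n}"
    and "edge_weight E X {..<n} \<le> max_degree n E * card X"
proof -
  have "(\<Sum>x\<in>X. min_degree n E) \<le> (\<Sum>x\<in>X. real (degree n E x))"
    using assms degree_bounds(1) by (intro sum_mono) auto
  then show "min_degree n E * card X \<le> edge_weight E X {..<n}"
    by (simp add: edge_weight_all mult.commute)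
  have "(\<Sum>x\<in>X. real (degree n E x)) \<le> (\<Sum>x\<in>X. max_degree n E)"
    using assms degree_bounds(2) by (intro sum_mono) auto
  then show "edge_weight E X {..<n} \<le> max_degree n E * card X"
    by (simp add: edge_weight_all mult.commute)
qed

lemma avg_degree_le_max_degree:
  assumes "1 \<le> n"
  shows "avg_degree n E \<le> max_degree n E"
proof -
  have "(\<Sum>v<n. real (degree n E v)) \<le> max_degree n E * n"
    using edge_weight_all_bounds(2)[of "{..<n}" n E] by (simp add: edge_weight_all)
  then show ?thesis
    using assms by (simp add: avg_degree_def divide_le_eq)
qed

lemma edge_weight_le_mixing:
  assumes "controls_edge_distribution n E lam" "X \<subseteq> {..<n}" "Y \<subseteq> {..<n}"
  shows "edge_weight E X Y
    \<le> avg_degree n E / n * card X * card Y + lam * sqrt (real (card X) * real (card Y))"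
proof -
  have "\<bar>real (edges_between E X Y) - avg_degree n E / n * card X * card Y\<bar>
      \<le> lam * sqrt (real (card X) * real (card Y))"
    using assms unfolding controls_edge_distribution_def by blast
  moreover have "real (edges_between E X Y) = edge_weight E X Y"
    using assms(2,3) by (intro edges_between_eq_edge_weight) (auto intro: finite_subset)
  ultimately show ?thesis
    by linarith
qed

text \<open>Here \<open>s = |S|\<close>, \<open>t = |T|\<close> and \<open>e = e(S, V - T)\<close>; the two lower bounds for \<open>e\<close> come from
  degree counting and from the edge distribution bound for \<open>e(S, T)\<close>.\<close>

lemma deficiency_bound_arith:
  fixes s t n dmin dmax d lam e :: real
  assumes "0 \<le> lam" "9 * lam \<le> d" "d \<le> dmax" "dmax - dmin \<le> lam"
    and "0 \<le> t" "t < s" "s + t \<le> n"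
    and degree_count: "dmin * s - dmax * t \<le> e"
    and mixing: "dmin * s - (d / n * s * t + lam * sqrt (s * t)) \<le> e"
  shows "(dmin - 9 * lam) * (s - t) \<le> e"
proof (cases "t \<le> 9 * (s - t)")
  case True
  have "lam * t \<le> lam * (9 * (s - t))"
    using True \<open>0 \<le> lam\<close> by (rule mult_left_mono)
  moreover have "dmax * t \<le> (dmin + lam) * t"
    using assms(4,5) by (intro mult_right_mono) auto
  ultimately show ?thesis
    using degree_count by (simp add: algebra_simps)
next
  case False
  then have "s \<le> 2 * t"
    using assms(5) by (simp add: algebra_simps)
  have "sqrt (s * t) \<le> sqrt (s * s)"
    using assms(5,6) by (intro real_sqrt_le_mono mult_left_mono) auto
  then have "lam * sqrt (s * t) \<le> lam * (2 * t)"
    using \<open>s \<le> 2 * t\<close> assms(1,5,6) by (simp add: mult_left_mono)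
  moreover have "d / n * s * t \<le> 2 / 3 * d * t"
  proof -
    have "0 < n" "3 * s \<le> 2 * n"
      using assms(5-7) \<open>s \<le> 2 * t\<close> by linarith+
    then have "s / n \<le> 2 / 3"
      by (simp add: divide_le_eq)
    moreover have "0 \<le> d * t"
      using assms(1,2,5) by simp
    ultimately show ?thesis
      using mult_left_mono[of "s / n" "2 / 3" "d * t"] by (simp add: algebra_simps)
  qed
  moreover have "2 / 3 * d * t + lam * (2 * t) \<le> dmin * t"
    using mult_right_mono[of "2 / 3 * d + 2 * lam" dmin t] assms(2-5) by (simp add: algebra_simps)
  moreover have "9 * lam * t \<le> 9 * lam * s"
    using assms(1,6) by (simp add: mult_left_mono)
  ultimately have "dmin * s - dmin * t - (9 * lam * s - 9 * lam * t) \<le> e"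
    using mixing by linarith
  then show ?thesis
    by (simp add: algebra_simps)
qed

lemma edge_weight_compl_lower_bound:
  assumes simple: "simple_graph n E" and "0 \<le> lam"
    and control: "controls_edge_distribution n E lam"
    and spread: "max_degree n E - min_degree n E \<le> lam" and "9 * lam \<le> avg_degree n E"
    and S: "S \<subseteq> {..<n}" and T: "T \<subseteq> {..<n}"
    and "card T < card S" "card S + card T \<le> n"
  shows "(min_degree n E - 9 * lam) * (real (card S) - real (card T))
    \<le> edge_weight E S ({..<n} - T)"
proof (rule deficiency_bound_arith)
  have "card S \<le> n"
    using card_mono[OF _ S] by simp
  then show "avg_degree n E \<le> max_degree n E"
    using \<open>card T < card S\<close> by (intro avg_degree_le_max_degree) linarith
  have split: "edge_weight E S ({..<n} - T) = edge_weight E S {..<n} - edge_weight E S T"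
    using T by (simp add: edge_weight_Diff)
  have "edge_weight E S T \<le> edge_weight E T {..<n}"
    using edge_weight_commute[OF simple S T] edge_weight_Diff[OF S, of E T]
      edge_weight_nonneg[of E T "{..<n} - S"]
    by simp
  then show "min_degree n E * card S - max_degree n E * card T \<le> edge_weight E S ({..<n} - T)"
    using split edge_weight_all_bounds[OF S, of E] edge_weight_all_bounds[OF T, of E] by linarith
  show "min_degree n E * card S - (avg_degree n E / n * card S * card T
      + lam * sqrt (real (card S) * real (card T))) \<le> edge_weight E S ({..<n} - T)"
    using split edge_weight_all_bounds(1)[OF S, of E] edge_weight_le_mixing[OF control S T]
    by linarith
qed (use assms in auto)

lemma card_lessThan_Diff:
  assumes "X \<subseteq> {..<n}"
  shows "real (card ({..<n} - X)) = real n - real (card X)"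
  using assms card_mono[OF _ assms] by (simp add: card_Diff_subset finite_subset of_nat_diff)

lemma min_degree_gt:
  assumes "1 \<le> n" "max_degree n E - min_degree n E \<le> lam" "10 * lam < avg_degree n E"
  shows "9 * lam < min_degree n E"
  using avg_degree_le_max_degree[OF assms(1), of E] assms(2,3) by linarith

lemma hall_condition_scaled_adjacency:
  assumes simple: "simple_graph n E" and "1 \<le> n" "0 \<le> lam"
    and control: "controls_edge_distribution n E lam"
    and spread: "max_degree n E - min_degree n E \<le> lam" and dense: "10 * lam < avg_degree n E"
  shows "hall_condition n (\<lambda>i j. adjacency_matrix E i j / (min_degree n E - 9 * lam))"
  unfolding hall_condition_def
proof (intro allI impI)
  fix S T
  assume S: "S \<subseteq> {..<n}" and T: "T \<subseteq> {..<n}"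
  define c where "c = min_degree n E - 9 * lam"
  have "0 < c"
    using min_degree_gt[OF \<open>1 \<le> n\<close> spread dense] by (simp add: c_def)
  have nine: "9 * lam \<le> avg_degree n E"
    using dense \<open>0 \<le> lam\<close> by linarith
  have bound: "c * (real (card S) - real (card T)) \<le> edge_weight E S ({..<n} - T)"
  proof -
    consider "card S \<le> card T" | "card T < card S" "card S + card T \<le> n"
      | "card T < card S" "n < card S + card T"
      by linarith
    then show ?thesis
    proof cases
      case 1
      then have "c * (real (card S) - real (card T)) \<le> 0"
        using \<open>0 < c\<close> by (simp add: mult_nonneg_nonpos)
      then show ?thesis
        using edge_weight_nonneg[of E S "{..<n} - T"] by linarith
    next
      case 2
      then show ?thesis
        unfolding c_def
        by (rule edge_weight_compl_lower_bound[OF simple \<open>0 \<le> lam\<close> control spread nine S T])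
    next
      case 3 \<comment> \<open>pass to complements: \<open>(V - T, V - S)\<close> has the same deficiency \<open>|S| - |T|\<close>\<close>
      have S': "{..<n} - T \<subseteq> {..<n}" and T': "{..<n} - S \<subseteq> {..<n}"
        by auto
      have "card ({..<n} - S) < card ({..<n} - T)" "card ({..<n} - T) + card ({..<n} - S) \<le> n"
        using 3 card_lessThan_Diff[OF S] card_lessThan_Diff[OF T] by linarith+
      then have "c * (real (card ({..<n} - T)) - real (card ({..<n} - S)))
          \<le> edge_weight E ({..<n} - T) ({..<n} - ({..<n} - S))"
        unfolding c_def
        by (rule edge_weight_compl_lower_bound[OF simple \<open>0 \<le> lam\<close> control spread nine S' T'])
      also have "{..<n} - ({..<n} - S) = S"
        using S by auto
      also have "edge_weight E ({..<n} - T) S = edge_weight E S ({..<n} - T)"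
        using edge_weight_commute[OF simple S S'] by (rule sym)
      finally show ?thesis
        using card_lessThan_Diff[OF S] card_lessThan_Diff[OF T] by simp
    qed
  qed
  have "(\<Sum>i\<in>S. \<Sum>j\<in>{..<n} - T. adjacency_matrix E i j / c) = edge_weight E S ({..<n} - T) / c"
    by (simp add: edge_weight_def sum_divide_distrib)
  moreover have "real (card S) - real (card T) \<le> edge_weight E S ({..<n} - T) / c"
    using bound \<open>0 < c\<close> by (simp add: pos_le_divide_eq mult.commute)
  ultimately show "real (card S) \<le> real (card T)
      + (\<Sum>i\<in>S. \<Sum>j\<in>{..<n} - T. adjacency_matrix E i j / (min_degree n E - 9 * lam))"
    unfolding c_def by linarith
qed

lemma doubly_superstochastic_scaled_adjacency:
  assumes "simple_graph n E" "1 \<le> n" "0 \<le> lam" "controls_edge_distribution n E lam"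
    and "max_degree n E - min_degree n E \<le> lam" "10 * lam < avg_degree n E"
  shows "doubly_superstochastic n (\<lambda>i j. adjacency_matrix E i j / (min_degree n E - 9 * lam))"
proof (rule doubly_superstochastic_if_hall)
  show "\<forall>i<n. \<forall>j<n. 0 \<le> adjacency_matrix E i j / (min_degree n E - 9 * lam)"
    using min_degree_gt[OF assms(2,5,6)] by (simp add: adjacency_matrix_def)
  show "hall_condition n (\<lambda>i j. adjacency_matrix E i j / (min_degree n E - 9 * lam))"
    using assms by (rule hall_condition_scaled_adjacency)
qed

lemma filterlim_at_top_of_div_ln_square:
  fixes x :: "nat \<Rightarrow> real"
  assumes "filterlim (\<lambda>n. x n / (ln (real n))\<^sup>2) at_top sequentially"
  shows "filterlim x at_top sequentially"
proof (rule filterlim_at_top_mono[OF assms])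
  have "\<forall>\<^sub>F n in sequentially. 0 \<le> x n / (ln (real n))\<^sup>2"
    using assms by (simp add: filterlim_at_top)
  moreover have "\<forall>\<^sub>F n in sequentially. 1 \<le> ln (real n)"
    using eventually_ge_at_top[of 3]
  proof eventually_elim
    fix n :: nat
    assume "3 \<le> n"
    then have "exp 1 \<le> real n"
      using exp_le by linarith
    then show "1 \<le> ln (real n)"
      using \<open>3 \<le> n\<close> by (simp add: ln_ge_iff)
  qed
  ultimately show "\<forall>\<^sub>F n in sequentially. x n / (ln (real n))\<^sup>2 \<le> x n"
  proof eventually_elim
    fix n :: nat
    assume "0 \<le> x n / (ln (real n))\<^sup>2" "1 \<le> ln (real n)"
    then have "x n / (ln (real n))\<^sup>2 * 1 \<le> x n / (ln (real n))\<^sup>2 * (ln (real n))\<^sup>2"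
      by (intro mult_left_mono one_le_power)
    then show "x n / (ln (real n))\<^sup>2 \<le> x n"
      using \<open>1 \<le> ln (real n)\<close> by simp
  qed
qed

theorem corollary1:
  fixes G :: "nat \<Rightarrow> nat \<Rightarrow> nat \<Rightarrow> bool"
    and lam :: "nat \<Rightarrow> real"
  assumes simple: "\<And>n. simple_graph n (G n)"
    and lam_pos: "\<And>n. lam n > 0"
    and control: "\<And>n. n \<ge> 1 \<Longrightarrow> controls_edge_distribution n (G n) (lam n)"
    and cond1: "\<And>n. n \<ge> 1 \<Longrightarrow> max_degree n (G n) - min_degree n (G n) \<le> lam n"
    and cond2: "filterlim (\<lambda>n. (avg_degree n (G n) / lam n) / (ln (real n))\<^sup>2) at_top sequentially"
    and cond3: "filterlim (\<lambda>n. ln (avg_degree n (G n)) * ln (avg_degree n (G n) / lam n) / ln (real n))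
                  at_top sequentially"
  shows "\<forall>\<^sub>F n in sequentially.
           doubly_superstochastic n
             (\<lambda>i j. adjacency_matrix (G n) i j / (min_degree n (G n) - 9 * lam n))"
proof -
  have "filterlim (\<lambda>n. avg_degree n (G n) / lam n) at_top sequentially"
    using cond2 by (rule filterlim_at_top_of_div_ln_square)
  then have "\<forall>\<^sub>F n in sequentially. 10 < avg_degree n (G n) / lam n"
    by (simp add: filterlim_at_top_dense)
  then have "\<forall>\<^sub>F n in sequentially. 10 * lam n < avg_degree n (G n)"
    by eventually_elim (simp add: less_divide_eq lam_pos)
  moreover have "\<forall>\<^sub>F n in sequentially. 1 \<le> n"
    by (rule eventually_ge_at_top)
  ultimately show ?thesis
    by eventually_elim
      (intro doubly_superstochastic_scaled_adjacency simple control cond1 less_imp_le[OF lam_pos])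
qed

end
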